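(* Let $m\ge 2$ be an integer, let $z_1,z_2,\dots$ be i.i.d. standard normal random variables, let $I_1,\dots,I_m$ be positive integers, and set $N_1=I_1$, $N_i=N_{i-1}+I_i$ for $i>1$. Let $r_1,\dots,r_m>0$ and define the events $\zeta_i=\{\sum_{j=1}^{N_i} z_j^2>r_i^2\}$, $i=1,\dots,m$. For parameters $u_1^m=(u_1,\dots,u_m)$ with $0\le u_i<1/2$, define recursively $$h_1=u_1,\qquad h_i=h_{i-1}+u_i(1-2h_{i-1}),$$ $$g_1=e^{-u_1 r_m^2}(1-2u_1)^{-I_m/2},\qquad g_i=g_{i-1}\,e^{-u_i(1-2h_{i-1})r_{m-i+1}^2}\,(1-2h_i)^{-I_{m-i+1}/2},$$ so that $1-2h_i=\prod_{j\le i}(1-2u_j)$. Then $$\Pr\left(\bigcap_{i=1}^m\zeta_i\right)\le\inf_{u_1^m}\frac{g_{m-1}(u_1^m)\,\Pr\left(\chi^2_{I_1}>(1-2h_{m-1})r_1^2\right)}{(1-2h_{m-1})^{I_1/2}},$$ the infimum being over all $u_1^m$ with $0\le u_i<1/2$ for all $i$.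
   Context: For a positive integer $k$, $\chi^2_k$ denotes a random variable with the central chi-square distribution with $k$ degrees of freedom. *)

theory Defs
  imports "HOL-Probability.Probability"
begin

definition chi2_density :: "nat \<Rightarrow> real \<Rightarrow> real" where
  "chi2_density k x = (if x > 0 then
      x powr (real k / 2 - 1) * exp (- x / 2) / (2 powr (real k / 2) * Gamma (real k / 2))
    else 0)"

definition chi2_tail :: "nat \<Rightarrow> real \<Rightarrow> real" where
  "chi2_tail k c = measure (density lborel (\<lambda>x. ennreal (chi2_density k x))) {c<..}"

text \<open>h_i(u); h_0 = 0 so that h_1 = u_1.\<close>
primrec hh :: "(nat \<Rightarrow> real) \<Rightarrow> nat \<Rightarrow> real" where
  "hh u 0 = 0"
| "hh u (Suc i) = hh u i + u (Suc i) * (1 - 2 * hh u i)"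

text \<open>g_i(u); g_0 = 1 so that g_1 = exp(-u_1 r_m^2) (1-2u_1)^(-I_m/2).\<close>
primrec gg :: "nat \<Rightarrow> (nat \<Rightarrow> nat) \<Rightarrow> (nat \<Rightarrow> real) \<Rightarrow> (nat \<Rightarrow> real) \<Rightarrow> nat \<Rightarrow> real" where
  "gg m I r u 0 = 1"
| "gg m I r u (Suc i) = gg m I r u i
      * exp (- u (Suc i) * (1 - 2 * hh u i) * (r (m - i))\<^sup>2)
      * (1 - 2 * hh u (Suc i)) powr (- real (I (m - i)) / 2)"

end

theory Submission
  imports Defs
begin

text \<open>
  Write S(n) for the sum of the first n squares and
  T(n, w) = E[1(zeta_1 \<inter> ... \<inter> zeta_n) exp(w S(N_n))], so that the probability
  in question is T(m, 0). On zeta_n, raising the exponent from w to w' \<ge> w costs at most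
  the factor exp(-(w' - w) r_n^2), and S(N_n) is S(N_{n-1}) plus an independent block of
  I_n squares, a chi^2_{I_n} variable with moment generating function (1 - 2w')^(-I_n/2).
  Hence T(n, w) \<le> exp(-(w' - w) r_n^2) (1 - 2w')^(-I_n/2) T(n - 1, w'). Iterating
  from n = m down to n = 2 with w = h_{i-1}, w' = h_i produces the factor g_{m-1}, and the
  last term T(1, h) = (1 - 2h)^(-I_1/2) Pr(chi^2_{I_1} > (1 - 2h) r_1^2) is an exponential
  tilting of the chi-square density, which maps exp(w x) times the density at x to a
  multiple of the density at (1 - 2w) x.
\<close>

section \<open>The chi-square density\<close>

lemma chi2_density_nonneg [simp]: "0 \<le> chi2_density k x"
  unfolding chi2_density_def by (cases "k = 0") (auto intro!: divide_nonneg_pos)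

lemma borel_measurable_chi2_density [measurable]: "chi2_density k \<in> borel_measurable borel"
  unfolding chi2_density_def by measurable

lemma chi2_density_nonpos: "x \<le> 0 \<Longrightarrow> chi2_density k x = 0"
  unfolding chi2_density_def by auto

definition chi2_const :: "nat \<Rightarrow> real" where
  "chi2_const k = 2 powr (real k / 2) * Gamma (real k / 2)"

lemma chi2_const_pos: "k > 0 \<Longrightarrow> chi2_const k > 0"
  unfolding chi2_const_def by simp

lemma chi2_density_pos_eq:
  "x > 0 \<Longrightarrow> chi2_density k x = x powr (real k / 2 - 1) * exp (- x / 2) / chi2_const k"
  unfolding chi2_density_def chi2_const_def by simp

lemma chi2_const_add:
  assumes "a > 0" "b > 0"
  shows "chi2_const a * chi2_const b = chi2_const (a + b) * Beta (real b / 2) (real a / 2)"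
proof -
  have "Gamma (real (a + b) / 2) > 0" using assms by simp
  then show ?thesis
    by (simp add: chi2_const_def Beta_def add_divide_distrib powr_add add.commute)
qed

lemma Beta_pos: "a > 0 \<Longrightarrow> b > 0 \<Longrightarrow> Beta a b > (0::real)"
  unfolding Beta_def by simp

lemma nn_integral_beta_kernel:
  fixes p q x :: real
  assumes "p > -1" "q > -1" "x > 0"
  shows "(\<integral>\<^sup>+y. ennreal ((x - y) powr p * y powr q * indicator {0<..<x} y) \<partial>lborel)
       = ennreal (x powr (p + q + 1) * Beta (q + 1) (p + 1))"
proof -
  have "((\<lambda>t. t powr (q + 1 - 1) * (1 - t) powr (p + 1 - 1)) has_integral Beta (q + 1) (p + 1)) {0..1}"
    using assms by (intro has_integral_Beta_real) auto
  then have beta: "(\<integral>\<^sup>+t. ennreal ((1 - t) powr p * t powr q * indicator {0<..<1} t) \<partial>lborel)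
      = ennreal (Beta (q + 1) (p + 1))"
    by (subst nn_integral_has_integral_lebesgue'[symmetric])
       (auto intro!: nn_integral_cong simp: indicator_def mult.commute)
  have scale: "ennreal ((x - x * t) powr p * (x * t) powr q * indicator {0<..<x} (x * t))
      = ennreal (x powr (p + q)) * ennreal ((1 - t) powr p * t powr q * indicator {0<..<1} t)" for t
  proof (cases "0 < t \<and> t < 1")
    case True
    have "x - x * t = x * (1 - t)" by (simp add: algebra_simps)
    with True assms show ?thesis
      by (simp add: powr_mult powr_add ennreal_mult[symmetric] mult_ac)
  next
    case False
    with assms have "\<not> (0 < x * t \<and> x * t < x)"
      by (auto simp: zero_less_mult_iff mult_less_cancel_left1)
    with False show ?thesis by simp
  qed
  have "(\<integral>\<^sup>+y. ennreal ((x - y) powr p * y powr q * indicator {0<..<x} y) \<partial>lborel)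
      = ennreal x * (\<integral>\<^sup>+t. ennreal (x powr (p + q)) * ennreal ((1 - t) powr p * t powr q * indicator {0<..<1} t) \<partial>lborel)"
    using assms by (subst nn_integral_real_affine[where c = x and t = 0]) (simp_all add: scale)
  also have "\<dots> = ennreal x * (ennreal (x powr (p + q)) * ennreal (Beta (q + 1) (p + 1)))"
    by (subst nn_integral_cmult) (measurable, simp only: beta)
  also have "\<dots> = ennreal (x powr (p + q + 1) * Beta (q + 1) (p + 1))"
    using assms Beta_pos[of "q + 1" "p + 1"] by (simp add: ennreal_mult[symmetric] powr_add mult_ac)
  finally show ?thesis .
qed

lemma chi2_density_convolution:
  assumes a: "a > 0" and b: "b > 0"
  shows "(\<integral>\<^sup>+y. ennreal (chi2_density a (x - y)) * ennreal (chi2_density b y) \<partial>lborel)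
       = ennreal (chi2_density (a + b) x)"
proof (cases "x > 0")
  case False
  then have zero: "ennreal (chi2_density a (x - y)) * ennreal (chi2_density b y) = 0" for y
    by (cases "y > 0") (simp_all add: chi2_density_nonpos)
  have "(\<integral>\<^sup>+y. ennreal (chi2_density a (x - y)) * ennreal (chi2_density b y) \<partial>lborel)
      = (\<integral>\<^sup>+(y::real). 0 \<partial>lborel)"
    by (rule nn_integral_cong) (rule zero)
  with False show ?thesis by (simp add: chi2_density_nonpos)
next
  case True
  define p where "p = real a / 2 - 1"
  define q where "q = real b / 2 - 1"
  define K where "K = exp (- x / 2) / (chi2_const a * chi2_const b)"
  have C: "chi2_const a > 0" "chi2_const b > 0" using a b by (simp_all add: chi2_const_pos)
  then have "K \<ge> 0" by (simp add: K_def)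
  have pq: "p > -1" "q > -1" using a b by (auto simp: p_def q_def)
  have pointwise: "ennreal (chi2_density a (x - y)) * ennreal (chi2_density b y)
      = ennreal K * ennreal ((x - y) powr p * y powr q * indicator {0<..<x} y)" for y
  proof (cases "0 < y \<and> y < x")
    case True
    have "exp (- (x - y) / 2) * exp (- y / 2) = exp (- x / 2)"
      by (simp add: exp_add[symmetric] field_simps)
    with True C show ?thesis
      by (simp add: chi2_density_pos_eq p_def q_def K_def ennreal_mult[symmetric] field_simps)
  next
    case False
    then show ?thesis by (auto simp: chi2_density_nonpos)
  qed
  have "(\<integral>\<^sup>+y. ennreal (chi2_density a (x - y)) * ennreal (chi2_density b y) \<partial>lborel)
      = ennreal K * ennreal (x powr (p + q + 1) * Beta (q + 1) (p + 1))"
    using C by (simp add: pointwise nn_integral_cmult nn_integral_beta_kernel pq True K_def)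
  also have "\<dots> = ennreal (K * (x powr (p + q + 1) * Beta (q + 1) (p + 1)))"
    using \<open>K \<ge> 0\<close> Beta_pos[of "q + 1" "p + 1"] pq by (simp add: ennreal_mult)
  also have "K * (x powr (p + q + 1) * Beta (q + 1) (p + 1)) = chi2_density (a + b) x"
  proof -
    have exponent: "p + q + 1 = real (a + b) / 2 - 1"
      and beta: "Beta (q + 1) (p + 1) = Beta (real b / 2) (real a / 2)"
      by (simp_all add: p_def q_def)
    have "Beta (real b / 2) (real a / 2) > 0"
      using a b by (intro Beta_pos) auto
    then show ?thesis
      unfolding exponent beta
      using True by (simp add: K_def chi2_const_add[OF a b] chi2_density_pos_eq)
  qed
  finally show ?thesis .
qed

section \<open>Sums of squares of independent standard normals\<close>

lemma chi2_density_one_square: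
  assumes "x > 0"
  shows "chi2_density 1 (x\<^sup>2) * (2 * x) = 2 * std_normal_density x"
proof -
  have "(x\<^sup>2) powr (- (1 / 2)) = inverse x"
    using assms by (simp add: powr_minus powr_half_sqrt)
  moreover have "2 powr (1 / 2) * Gamma (1 / 2) = sqrt (2 * pi)"
    by (simp add: powr_half_sqrt Gamma_one_half_real real_sqrt_mult)
  ultimately have "chi2_density 1 (x\<^sup>2) = inverse x * exp (- (x\<^sup>2) / 2) / sqrt (2 * pi)"
    using assms by (simp add: chi2_density_def)
  with assms show ?thesis
    by (simp add: std_normal_density_def field_simps)
qed

lemma nn_integral_std_normal_symmetric:
  "(\<integral>\<^sup>+x. ennreal (std_normal_density x) * indicator {-s..s} x \<partial>lborel)
     = (\<integral>\<^sup>+x. ennreal (2 * std_normal_density x) * indicator {0..s} x \<partial>lborel)"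
proof -
  let ?f = "\<lambda>S x. ennreal (std_normal_density x) * indicator S x"
  have reflect: "(\<integral>\<^sup>+x. ?f {-s..0} x \<partial>lborel) = (\<integral>\<^sup>+x. ?f {0..s} x \<partial>lborel)"
    by (subst nn_integral_real_affine[where c = "-1" and t = 0])
       (auto intro!: nn_integral_cong simp: std_normal_density_def indicator_def)
  have "(\<integral>\<^sup>+x. ?f {-s..s} x \<partial>lborel) = (\<integral>\<^sup>+x. ?f {-s..0} x + ?f {0..s} x \<partial>lborel)"
    using AE_lborel_singleton[of 0]
    by (intro nn_integral_cong_AE, eventually_elim) (auto simp: indicator_def)
  also have "\<dots> = (\<integral>\<^sup>+x. ?f {0..s} x + ?f {0..s} x \<partial>lborel)"
    by (simp add: nn_integral_add reflect)
  also have "\<dots> = (\<integral>\<^sup>+x. ennreal (2 * std_normal_density x) * indicator {0..s} x \<partial>lborel)"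
    by (intro nn_integral_cong) (simp add: ennreal_plus[symmetric] distrib_right[symmetric])
  finally show ?thesis .
qed

lemma nn_integral_chi2_one_atMost_square:
  assumes "s > 0"
  shows "(\<integral>\<^sup>+x. ennreal (chi2_density 1 x) * indicator {..s\<^sup>2} x \<partial>lborel)
       = (\<integral>\<^sup>+x. ennreal (2 * std_normal_density x) * indicator {0..s} x \<partial>lborel)"
proof -
  have "(\<integral>\<^sup>+x. ennreal (chi2_density 1 x) * indicator {..s\<^sup>2} x \<partial>lborel)
      = (\<integral>\<^sup>+x. ennreal (chi2_density 1 x * indicator {(\<lambda>y. y\<^sup>2) 0..(\<lambda>y. y\<^sup>2) s} x) \<partial>lborel)"
    by (intro nn_integral_cong) (auto simp: indicator_def chi2_density_nonpos)
  also have "\<dots> = (\<integral>\<^sup>+x. ennreal (chi2_density 1 (x\<^sup>2) * (2 * x) * indicator {0..s} x) \<partial>lborel)"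
    using assms
    by (intro nn_integral_substitution[where g' = "\<lambda>x. 2 * x"])
       (auto simp: set_borel_measurable_def intro!: derivative_eq_intros continuous_intros)
  also have "\<dots> = (\<integral>\<^sup>+x. ennreal (2 * std_normal_density x) * indicator {0..s} x \<partial>lborel)"
    using AE_lborel_singleton[of 0]
    by (intro nn_integral_cong_AE, eventually_elim)
       (auto simp: indicator_def chi2_density_one_square[simplified])
  finally show ?thesis .
qed

context prob_space
begin

lemma emeasure_std_normal_square_le:
  assumes X: "distributed M lborel X std_normal_density"
  shows "emeasure M {\<omega> \<in> space M. (X \<omega>)\<^sup>2 \<le> a}
       = (\<integral>\<^sup>+x. ennreal (chi2_density 1 x) * indicator {..a} x \<partial>lborel)"
proof (cases "a > 0")
  case True
  define s where "s = sqrt a"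
  have s: "s > 0" "a = s\<^sup>2" using True by (auto simp: s_def)
  have "{\<omega> \<in> space M. (X \<omega>)\<^sup>2 \<le> a} = X -` {-s..s} \<inter> space M"
    using s by (auto simp: power2_le_iff_abs_le abs_le_iff)
  then show ?thesis
    using distributed_emeasure[OF X, of "{-s..s}"] nn_integral_std_normal_symmetric[of s]
      nn_integral_chi2_one_atMost_square[OF s(1)] s(2)
    by simp
next
  case False
  have [measurable]: "X \<in> borel_measurable M"
    using X by (simp add: distributed_def)
  have "(\<integral>\<^sup>+x. ennreal (chi2_density 1 x) * indicator {..a} x \<partial>lborel) = (\<integral>\<^sup>+(x::real). 0 \<partial>lborel)"
    using False by (intro nn_integral_cong) (auto simp: indicator_def chi2_density_nonpos)
  moreover have "emeasure M {\<omega> \<in> space M. (X \<omega>)\<^sup>2 \<le> a} \<le> emeasure M (X -` {0} \<inter> space M)"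
    using False by (intro emeasure_mono)
      (auto simp: not_less intro: power2_less_eq_zero_iff[THEN iffD1] order_trans)
  moreover have "emeasure M (X -` {0} \<inter> space M) = 0"
  proof -
    have "emeasure M (X -` {0} \<inter> space M)
        = (\<integral>\<^sup>+x. ennreal (std_normal_density x) * indicator {0} x \<partial>lborel)"
      using distributed_emeasure[OF X, of "{0}"] by simp
    also have "\<dots> = (\<integral>\<^sup>+(x::real). 0 \<partial>lborel)"
      using AE_lborel_singleton[of 0]
      by (intro nn_integral_cong_AE, eventually_elim) (simp add: indicator_def)
    finally show ?thesis by simp
  qed
  ultimately show ?thesis by simp
qed

lemma distributed_std_normal_square:
  assumes X: "distributed M lborel X std_normal_density"
  shows "distributed M lborel (\<lambda>\<omega>. (X \<omega>)\<^sup>2) (chi2_density 1)"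
proof (rule distributedI_borel_atMost[where g = "\<lambda>a. measure M {\<omega> \<in> space M. (X \<omega>)\<^sup>2 \<le> a}"])
  have [measurable]: "X \<in> borel_measurable M"
    using X by (simp add: distributed_def)
  show "(\<lambda>\<omega>. (X \<omega>)\<^sup>2) \<in> borel_measurable M" by measurable
  show "(\<integral>\<^sup>+x. ennreal (chi2_density 1 x * indicator {..a} x) \<partial>lborel)
      = ennreal (measure M {\<omega> \<in> space M. (X \<omega>)\<^sup>2 \<le> a})" for a
    using emeasure_std_normal_square_le[OF X, of a]
    by (simp add: emeasure_eq_measure ennreal_mult' ennreal_indicator)
qed (simp_all add: emeasure_eq_measure)

lemma distributed_sum_squares_std_normal:
  assumes indep: "indep_vars (\<lambda>_. borel) z UNIV"
    and normal: "\<And>j. distributed M lborel (z j) std_normal_density"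
    and J: "finite J" "J \<noteq> {}"
  shows "distributed M lborel (\<lambda>\<omega>. \<Sum>j\<in>J. (z j \<omega>)\<^sup>2) (chi2_density (card J))"
  using J
proof (induction J rule: finite_ne_induct)
  case (singleton j)
  then show ?case using distributed_std_normal_square[OF normal] by simp
next
  case (insert j J)
  have squares: "indep_vars (\<lambda>_. borel) (\<lambda>i \<omega>. (z i \<omega>)\<^sup>2) UNIV"
    by (rule indep_vars_compose2[OF indep]) measurable
  have "indep_var borel (\<lambda>\<omega>. (z j \<omega>)\<^sup>2) borel (\<lambda>\<omega>. \<Sum>i\<in>J. (z i \<omega>)\<^sup>2)"
    using insert by (intro indep_vars_sum[where X = "\<lambda>i \<omega>. (z i \<omega>)\<^sup>2"] indep_vars_subset[OF squares]) auto
  note distributed_convolution[OF this distributed_std_normal_square[OF normal] insert.IH]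
  moreover have "card J > 0"
    using insert by (simp add: card_gt_0_iff)
  then have "(\<lambda>x. \<integral>\<^sup>+y. ennreal (chi2_density 1 (x - y)) * ennreal (chi2_density (card J) y) \<partial>lborel)
      = (\<lambda>x. ennreal (chi2_density (card (insert j J)) x))"
    using insert by (simp only: chi2_density_convolution card_insert_disjoint) simp
  ultimately show ?case
    using insert by simp
qed

end

section \<open>Exponential tilting\<close>

lemma chi2_density_mult_exp:
  assumes "w < 1/2"
  shows "chi2_density k x * exp (w * x)
       = (1 - 2 * w) powr (1 - real k / 2) * chi2_density k ((1 - 2 * w) * x)"
proof (cases "x > 0")
  case True
  define a where "a = 1 - 2 * w"
  have a: "a > 0" using assms by (simp add: a_def)
  have "exp (- (a * x) / 2) = exp (- x / 2) * exp (w * x)"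
    unfolding a_def by (simp add: exp_add[symmetric] field_simps)
  moreover have "a powr (1 - real k / 2) * a powr (real k / 2 - 1) = 1"
    using a by (simp add: powr_add[symmetric])
  ultimately show ?thesis
    using True a unfolding a_def[symmetric]
    by (simp add: chi2_density_pos_eq powr_mult field_simps)
next
  case False
  moreover have "(1 - 2 * w) * x \<le> 0"
    using False assms by (simp add: mult_nonneg_nonpos)
  ultimately show ?thesis by (simp add: chi2_density_nonpos)
qed

lemma nn_integral_chi2_density_exp:
  assumes w: "w < 1/2" and T[measurable]: "T \<in> sets borel"
  shows "(\<integral>\<^sup>+x. ennreal (chi2_density k x * exp (w * x)) * indicator T ((1 - 2 * w) * x) \<partial>lborel)
       = ennreal ((1 - 2 * w) powr (- (real k / 2))) * emeasure (density lborel (chi2_density k)) T"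
proof -
  define a where "a = 1 - 2 * w"
  have a: "a > 0" using w by (simp add: a_def)
  have "emeasure (density lborel (chi2_density k)) T
      = (\<integral>\<^sup>+x. ennreal (chi2_density k x * indicator T x) \<partial>lborel)"
    by (subst emeasure_density) (auto intro!: nn_integral_cong simp: indicator_def)
  also have "\<dots> = ennreal a * (\<integral>\<^sup>+x. ennreal (chi2_density k (a * x) * indicator T (a * x)) \<partial>lborel)"
    using a by (subst nn_integral_real_affine[where c = a and t = 0]) auto
  finally have affine: "emeasure (density lborel (chi2_density k)) T = \<dots>" .
  have "(\<integral>\<^sup>+x. ennreal (chi2_density k x * exp (w * x)) * indicator T (a * x) \<partial>lborel)
      = (\<integral>\<^sup>+x. ennreal (a powr (1 - real k / 2)) * ennreal (chi2_density k (a * x) * indicator T (a * x)) \<partial>lborel)"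
    using chi2_density_mult_exp[OF w]
    by (intro nn_integral_cong) (simp add: a_def ennreal_mult[symmetric] indicator_def)
  also have "\<dots> = ennreal (a powr (1 - real k / 2))
      * (\<integral>\<^sup>+x. ennreal (chi2_density k (a * x) * indicator T (a * x)) \<partial>lborel)"
    by (rule nn_integral_cmult) measurable
  also have "a powr (1 - real k / 2) = a powr (- (real k / 2)) * a"
    using a powr_mult_base[of a "- (real k / 2)"] by (simp add: mult.commute)
  finally show ?thesis
    using a by (simp add: affine a_def ennreal_mult mult.assoc)
qed

context prob_space
begin

lemma distributed_emeasure_density_UNIV:
  assumes "distributed M lborel Y f"
  shows "emeasure (density lborel f) UNIV = 1"
proof -
  have "f \<in> borel_measurable borel" using assms by (simp add: distributed_def)
  then show ?thesis
    using distributed_emeasure[OF assms, of UNIV] by (simp add: emeasure_density emeasure_space_1)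
qed

lemma nn_integral_exp_chi2:
  assumes Y: "distributed M lborel Y (chi2_density k)" and w: "w < 1/2"
  shows "(\<integral>\<^sup>+\<omega>. ennreal (exp (w * Y \<omega>)) \<partial>M) = ennreal ((1 - 2 * w) powr (- (real k / 2)))"
proof -
  have "(\<integral>\<^sup>+\<omega>. ennreal (exp (w * Y \<omega>)) \<partial>M)
      = (\<integral>\<^sup>+x. ennreal (chi2_density k x * exp (w * x)) * indicator UNIV ((1 - 2 * w) * x) \<partial>lborel)"
    by (subst distributed_nn_integral[OF Y, symmetric]) (auto simp: ennreal_mult)
  then show ?thesis
    using nn_integral_chi2_density_exp[OF w, of UNIV k] distributed_emeasure_density_UNIV[OF Y]
    by simp
qed

lemma nn_integral_indicator_exp_chi2:
  assumes Y: "distributed M lborel Y (chi2_density k)" and w: "w < 1/2"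
  shows "(\<integral>\<^sup>+\<omega>. ennreal (indicator {c<..} (Y \<omega>) * exp (w * Y \<omega>)) \<partial>M)
       = ennreal ((1 - 2 * w) powr (- (real k / 2)) * chi2_tail k ((1 - 2 * w) * c))"
proof -
  define D where "D = density lborel (chi2_density k)"
  have "(\<integral>\<^sup>+\<omega>. ennreal (indicator {c<..} (Y \<omega>) * exp (w * Y \<omega>)) \<partial>M)
      = (\<integral>\<^sup>+x. ennreal (chi2_density k x * exp (w * x)) * indicator {(1 - 2 * w) * c<..} ((1 - 2 * w) * x) \<partial>lborel)"
    using w by (subst distributed_nn_integral[OF Y, symmetric])
      (auto intro!: nn_integral_cong simp: ennreal_mult indicator_def)
  also have "\<dots> = ennreal ((1 - 2 * w) powr (- (real k / 2))) * emeasure D {(1 - 2 * w) * c<..}"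
    using nn_integral_chi2_density_exp[OF w] by (simp add: D_def)
  also have "emeasure D {(1 - 2 * w) * c<..} = ennreal (chi2_tail k ((1 - 2 * w) * c))"
  proof -
    have "emeasure D {(1 - 2 * w) * c<..} \<le> emeasure D UNIV"
      by (rule emeasure_mono) (auto simp: D_def)
    then have "emeasure D {(1 - 2 * w) * c<..} \<noteq> \<top>"
      using distributed_emeasure_density_UNIV[OF Y] by (auto simp: D_def top_unique)
    then show ?thesis
      unfolding chi2_tail_def D_def[symmetric] by (rule emeasure_eq_ennreal_measure)
  qed
  finally show ?thesis
    by (simp add: ennreal_mult chi2_tail_def)
qed

end

section \<open>Independent blocks of a standard normal sequence\<close>

lemma indicator_gt_mult_exp_le:
  fixes s c w w' :: real
  assumes "w \<le> w'"
  shows "indicator {c<..} s * exp (w * s) \<le> exp (- (w' - w) * c) * exp (w' * s)"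
proof (cases "c < s")
  case True
  then have "w * s \<le> - (w' - w) * c + w' * s"
    using assms mult_left_mono[of c s "w' - w"] by (simp add: algebra_simps)
  with True show ?thesis by (simp add: exp_add[symmetric])
qed simp

lemma borel_measurable_PiM_sum_squares:
  assumes "J \<subseteq> A"
  shows "(\<lambda>x. \<Sum>j\<in>J. (x j)\<^sup>2 :: real) \<in> borel_measurable (PiM A (\<lambda>_. borel))"
  using assms by (intro borel_measurable_sum borel_measurable_power measurable_component_singleton) auto

lemma (in prob_space) indep_vars_nn_integral_restrict_mult:
  assumes indep: "indep_vars (\<lambda>_. borel) X UNIV"
    and AB: "A \<inter> B = {}"
    and f: "f \<in> borel_measurable (PiM A (\<lambda>_. borel))" and g: "g \<in> borel_measurable (PiM B (\<lambda>_. borel))"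
    and f_nonneg: "\<And>x. f x \<ge> 0" and g_nonneg: "\<And>x. g x \<ge> 0"
  shows "(\<integral>\<^sup>+\<omega>. ennreal (f (restrict (\<lambda>i. X i \<omega>) A) * g (restrict (\<lambda>i. X i \<omega>) B)) \<partial>M)
       = (\<integral>\<^sup>+\<omega>. ennreal (f (restrict (\<lambda>i. X i \<omega>) A)) \<partial>M) * (\<integral>\<^sup>+\<omega>. ennreal (g (restrict (\<lambda>i. X i \<omega>) B)) \<partial>M)"
proof -
  define K where "K = (\<lambda>b::bool. if b then A else B)"
  define F where "F = (\<lambda>b::bool. if b then (\<lambda>x. ennreal (f x)) else (\<lambda>x. ennreal (g x)))"
  have "indep_vars (\<lambda>j. PiM (K j) (\<lambda>_. borel)) (\<lambda>j \<omega>. restrict (\<lambda>i. X i \<omega>) (K j)) UNIV"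
    by (rule indep_vars_restrict[OF indep]) (auto simp: K_def disjoint_family_on_def AB Int_commute)
  then have "indep_vars (\<lambda>_. borel) (\<lambda>j \<omega>. F j (restrict (\<lambda>i. X i \<omega>) (K j))) UNIV"
    by (rule indep_vars_compose2) (auto simp: F_def K_def f g measurable_compose[OF _ measurable_ennreal])
  then have "(\<integral>\<^sup>+\<omega>. (\<Prod>j\<in>UNIV. F j (restrict (\<lambda>i. X i \<omega>) (K j))) \<partial>M)
      = (\<Prod>j\<in>UNIV. \<integral>\<^sup>+\<omega>. F j (restrict (\<lambda>i. X i \<omega>) (K j)) \<partial>M)"
    by (intro indep_vars_nn_integral) auto
  then show ?thesis
    by (simp add: UNIV_bool F_def K_def mult.commute ennreal_mult f_nonneg g_nonneg)
qed

locale std_normal_sequence = prob_space +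
  fixes z :: "nat \<Rightarrow> 'a \<Rightarrow> real"
  assumes indep: "indep_vars (\<lambda>_. borel) z UNIV"
    and std_normal: "\<And>j. distributed M lborel (z j) std_normal_density"
begin

lemma measurable_z [measurable]: "z j \<in> borel_measurable M"
  using std_normal[of j] by (simp add: distributed_def)

definition sum_sq :: "nat \<Rightarrow> 'a \<Rightarrow> real" where
  "sum_sq n \<omega> = (\<Sum>j\<in>{1..n}. (z j \<omega>)\<^sup>2)"

text \<open>The function T of the proof idea; N i is the index of the last square entering zeta_i.\<close>

definition tilted_tail :: "(nat \<Rightarrow> nat) \<Rightarrow> (nat \<Rightarrow> real) \<Rightarrow> nat \<Rightarrow> real \<Rightarrow> ennreal" where
  "tilted_tail N r n w = (\<integral>\<^sup>+\<omega>.
     ennreal ((\<Prod>i\<in>{1..n}. indicator {(r i)\<^sup>2<..} (sum_sq (N i) \<omega>)) * exp (w * sum_sq (N n) \<omega>)) \<partial>M)"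

lemma tilted_tail_zero:
  "tilted_tail N r n 0 = emeasure M {\<omega> \<in> space M. \<forall>i\<in>{1..n}. (r i)\<^sup>2 < sum_sq (N i) \<omega>}"
proof -
  have "{\<omega> \<in> space M. \<forall>i\<in>{1..n}. (r i)\<^sup>2 < sum_sq (N i) \<omega>} \<in> sets M"
    unfolding sum_sq_def by measurable
  moreover have "(\<Prod>i\<in>{1..n}. indicator {(r i)\<^sup>2<..} (sum_sq (N i) \<omega>) :: real)
      = indicator {\<omega> \<in> space M. \<forall>i\<in>{1..n}. (r i)\<^sup>2 < sum_sq (N i) \<omega>} \<omega>" if "\<omega> \<in> space M" for \<omega>
    using that by (auto simp: indicator_def prod_zero_iff)
  ultimately show ?thesis
    unfolding tilted_tail_def by (simp add: ennreal_indicator cong: nn_integral_cong)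
qed

lemma distributed_sum_sq:
  "n > 0 \<Longrightarrow> distributed M lborel (sum_sq n) (chi2_density n)"
  using distributed_sum_squares_std_normal[OF indep std_normal, of "{1..n}"]
  by (simp add: sum_sq_def[abs_def])

lemma tilted_tail_one:
  assumes "N 1 > 0" and "w < 1/2"
  shows "tilted_tail N r 1 w
       = ennreal ((1 - 2 * w) powr (- (real (N 1) / 2)) * chi2_tail (N 1) ((1 - 2 * w) * (r 1)\<^sup>2))"
  using nn_integral_indicator_exp_chi2[OF distributed_sum_sq[OF assms(1)] assms(2)]
  by (simp add: tilted_tail_def)

lemma nn_integral_tilted_tail_mult_block:
  assumes N: "mono N" and lt: "N p < N (Suc p)" and w: "w < 1/2"
  shows "(\<integral>\<^sup>+\<omega>. ennreal ((\<Prod>i\<in>{1..p}. indicator {(r i)\<^sup>2<..} (sum_sq (N i) \<omega>))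
            * exp (w * sum_sq (N p) \<omega>) * exp (w * (\<Sum>j\<in>{Suc (N p)..N (Suc p)}. (z j \<omega>)\<^sup>2))) \<partial>M)
       = tilted_tail N r p w * ennreal ((1 - 2 * w) powr (- (real (N (Suc p) - N p) / 2)))"
proof -
  define A where "A = {1..N p}"
  define B where "B = {Suc (N p)..N (Suc p)}"
  define F where "F x = (\<Prod>i\<in>{1..p}. indicator {(r i)\<^sup>2<..} (\<Sum>j\<in>{1..N i}. (x j)\<^sup>2))
    * exp (w * (\<Sum>j\<in>A. (x j)\<^sup>2))" for x :: "nat \<Rightarrow> real"
  define G where "G x = exp (w * (\<Sum>j\<in>B. (x j)\<^sup>2))" for x :: "nat \<Rightarrow> real"
  have sub: "{1..N i} \<subseteq> A" if "i \<in> {1..p}" for i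
    using that monoD[OF N, of i p] by (auto simp: A_def)
  have FA: "F (restrict (\<lambda>i. z i \<omega>) A)
      = (\<Prod>i\<in>{1..p}. indicator {(r i)\<^sup>2<..} (sum_sq (N i) \<omega>)) * exp (w * sum_sq (N p) \<omega>)" for \<omega>
  proof -
    have "(\<Sum>j\<in>{1..N i}. (restrict (\<lambda>i. z i \<omega>) A j)\<^sup>2) = sum_sq (N i) \<omega>" if "i \<in> {1..p}" for i
      unfolding sum_sq_def using sub[OF that] by (intro sum.cong) auto
    then have "(\<Prod>i\<in>{1..p}. indicator {(r i)\<^sup>2<..} (\<Sum>j\<in>{1..N i}. (restrict (\<lambda>i. z i \<omega>) A j)\<^sup>2))
        = (\<Prod>i\<in>{1..p}. indicator {(r i)\<^sup>2<..} (sum_sq (N i) \<omega>) :: real)"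
      by (intro prod.cong) simp_all
    moreover have "(\<Sum>j\<in>A. (restrict (\<lambda>i. z i \<omega>) A j)\<^sup>2) = sum_sq (N p) \<omega>"
      unfolding sum_sq_def A_def by (intro sum.cong) auto
    ultimately show ?thesis
      unfolding F_def by simp
  qed
  have GB: "G (restrict (\<lambda>i. z i \<omega>) B) = exp (w * (\<Sum>j\<in>B. (z j \<omega>)\<^sup>2))" for \<omega>
    unfolding G_def by (simp cong: sum.cong)
  have Fm: "F \<in> borel_measurable (PiM A (\<lambda>_. borel))"
    unfolding F_def[abs_def] using sub
    by (intro borel_measurable_times borel_measurable_prod borel_measurable_exp
        borel_measurable_times borel_measurable_const
        measurable_compose[OF borel_measurable_PiM_sum_squares borel_measurable_indicator]
        borel_measurable_PiM_sum_squares) auto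
  have Gm: "G \<in> borel_measurable (PiM B (\<lambda>_. borel))"
    unfolding G_def[abs_def] by (rule measurable_compose[OF borel_measurable_PiM_sum_squares]) auto
  have "(\<integral>\<^sup>+\<omega>. ennreal (F (restrict (\<lambda>i. z i \<omega>) A) * G (restrict (\<lambda>i. z i \<omega>) B)) \<partial>M)
      = (\<integral>\<^sup>+\<omega>. ennreal (F (restrict (\<lambda>i. z i \<omega>) A)) \<partial>M)
        * (\<integral>\<^sup>+\<omega>. ennreal (G (restrict (\<lambda>i. z i \<omega>) B)) \<partial>M)"
    by (rule indep_vars_nn_integral_restrict_mult[OF indep _ Fm Gm])
       (auto simp: A_def B_def F_def G_def intro!: mult_nonneg_nonneg prod_nonneg)
  moreover have "distributed M lborel (\<lambda>\<omega>. \<Sum>j\<in>B. (z j \<omega>)\<^sup>2) (chi2_density (N (Suc p) - N p))"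
    using distributed_sum_squares_std_normal[OF indep std_normal, of B] lt by (simp add: B_def)
  note nn_integral_exp_chi2[OF this w]
  ultimately show ?thesis
    unfolding B_def[symmetric] by (simp add: FA GB tilted_tail_def)
qed

lemma tilted_tail_Suc_le:
  assumes N: "mono N" and lt: "N p < N (Suc p)" and ww': "w \<le> w'" and w': "w' < 1/2"
  shows "tilted_tail N r (Suc p) w
    \<le> ennreal (exp (- (w' - w) * (r (Suc p))\<^sup>2) * (1 - 2 * w') powr (- (real (N (Suc p) - N p) / 2)))
      * tilted_tail N r p w'"
proof -
  define c where "c = exp (- (w' - w) * (r (Suc p))\<^sup>2)"
  define P where "P \<omega> = (\<Prod>i\<in>{1..p}. indicator {(r i)\<^sup>2<..} (sum_sq (N i) \<omega>) :: real)" for \<omega>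
  define Y where "Y \<omega> = (\<Sum>j\<in>{Suc (N p)..N (Suc p)}. (z j \<omega>)\<^sup>2)" for \<omega>
  have P_nonneg: "P \<omega> \<ge> 0" for \<omega> unfolding P_def by (intro prod_nonneg) auto
  have "{1..N (Suc p)} = {1..N p} \<union> {Suc (N p)..N (Suc p)}"
    using lt by auto
  then have split: "sum_sq (N (Suc p)) \<omega> = sum_sq (N p) \<omega> + Y \<omega>" for \<omega>
    unfolding sum_sq_def Y_def by (simp add: sum.union_disjoint)
  have pointwise: "(\<Prod>i\<in>{1..Suc p}. indicator {(r i)\<^sup>2<..} (sum_sq (N i) \<omega>)) * exp (w * sum_sq (N (Suc p)) \<omega>)
      \<le> c * (P \<omega> * exp (w' * sum_sq (N p) \<omega>) * exp (w' * Y \<omega>))" for \<omega>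
  proof -
    have "(\<Prod>i\<in>{1..Suc p}. indicator {(r i)\<^sup>2<..} (sum_sq (N i) \<omega>)) * exp (w * sum_sq (N (Suc p)) \<omega>)
        = P \<omega> * (indicator {(r (Suc p))\<^sup>2<..} (sum_sq (N (Suc p)) \<omega>) * exp (w * sum_sq (N (Suc p)) \<omega>))"
      by (simp add: P_def atLeastAtMostSuc_conv mult_ac)
    also have "\<dots> \<le> P \<omega> * (c * exp (w' * sum_sq (N (Suc p)) \<omega>))"
      unfolding c_def by (intro mult_left_mono indicator_gt_mult_exp_le ww' P_nonneg)
    also have "\<dots> = c * (P \<omega> * exp (w' * sum_sq (N p) \<omega>) * exp (w' * Y \<omega>))"
      by (simp add: split ring_distribs exp_add mult_ac)
    finally show ?thesis .
  qed
  have "tilted_tail N r (Suc p) w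
      \<le> (\<integral>\<^sup>+\<omega>. ennreal c * ennreal (P \<omega> * exp (w' * sum_sq (N p) \<omega>) * exp (w' * Y \<omega>)) \<partial>M)"
    unfolding tilted_tail_def using pointwise P_nonneg
    by (intro nn_integral_mono) (simp add: ennreal_mult[symmetric] c_def ennreal_leI)
  also have "\<dots> = ennreal c * (\<integral>\<^sup>+\<omega>. ennreal (P \<omega> * exp (w' * sum_sq (N p) \<omega>) * exp (w' * Y \<omega>)) \<partial>M)"
    by (rule nn_integral_cmult) (simp add: P_def Y_def sum_sq_def)
  also have "\<dots> = ennreal c * (tilted_tail N r p w' * ennreal ((1 - 2 * w') powr (- (real (N (Suc p) - N p) / 2))))"
    unfolding P_def Y_def by (simp only: nn_integral_tilted_tail_mult_block[OF N lt w'])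
  finally show ?thesis
    by (simp add: c_def ennreal_mult mult_ac)
qed

end

section \<open>The recursion for h and g\<close>

lemma one_minus_two_hh: "1 - 2 * hh u k = (\<Prod>j\<in>{1..k}. 1 - 2 * u j)"
proof (induction k)
  case (Suc k)
  have "1 - 2 * hh u (Suc k) = (1 - 2 * u (Suc k)) * (1 - 2 * hh u k)"
    by (simp add: algebra_simps)
  with Suc.IH show ?case by (simp add: prod.nat_ivl_Suc')
qed simp

lemma hh_lt_half:
  assumes "\<And>i. i \<in> {1..k} \<Longrightarrow> u i < 1/2"
  shows "hh u k < 1/2"
proof -
  have "0 < (\<Prod>j\<in>{1..k}. 1 - 2 * u j)"
    using assms by (intro prod_pos) force
  then show ?thesis using one_minus_two_hh[of u k] by linarith
qed

lemma gg_nonneg: "0 \<le> gg m I r u k"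
  by (induction k) auto

definition partial_sum :: "(nat \<Rightarrow> nat) \<Rightarrow> nat \<Rightarrow> nat" where
  "partial_sum I i = (\<Sum>k\<in>{1..i}. I k)"

lemma partial_sum_Suc: "partial_sum I (Suc i) = partial_sum I i + I (Suc i)"
  by (simp add: partial_sum_def)

lemma mono_partial_sum: "mono (partial_sum I)"
  by (auto intro!: monoI sum_mono2 simp: partial_sum_def)

context std_normal_sequence
begin

lemma tilted_tail_le_gg:
  assumes u: "\<forall>i\<in>{1..m}. 0 \<le> u i \<and> u i < 1/2" and I: "\<And>i. i \<in> {1..m} \<Longrightarrow> I i > 0"
    and "k < m"
  shows "tilted_tail (partial_sum I) r m 0
    \<le> ennreal (gg m I r u k) * tilted_tail (partial_sum I) r (m - k) (hh u k)"
  using \<open>k < m\<close>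
proof (induction k)
  case (Suc k)
  define p where "p = m - Suc k"
  have m_k: "m - k = Suc p" using Suc.prems by (simp add: p_def)
  have lt: "partial_sum I p < partial_sum I (Suc p)"
    using I[of "Suc p"] Suc.prems by (simp add: partial_sum_Suc p_def)
  have "hh u (Suc k) < 1/2" using u Suc.prems by (intro hh_lt_half) auto
  moreover have "hh u k \<le> hh u (Suc k)"
    using u Suc.prems hh_lt_half[of k u] by simp
  ultimately have "tilted_tail (partial_sum I) r (Suc p) (hh u k)
      \<le> ennreal (exp (- (hh u (Suc k) - hh u k) * (r (Suc p))\<^sup>2)
          * (1 - 2 * hh u (Suc k)) powr (- (real (partial_sum I (Suc p) - partial_sum I p) / 2)))
        * tilted_tail (partial_sum I) r p (hh u (Suc k))"
    by (intro tilted_tail_Suc_le[OF mono_partial_sum lt])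
  also have "\<dots> = ennreal (exp (- u (Suc k) * (1 - 2 * hh u k) * (r (m - k))\<^sup>2)
          * (1 - 2 * hh u (Suc k)) powr (- (real (I (m - k)) / 2)))
        * tilted_tail (partial_sum I) r (m - Suc k) (hh u (Suc k))"
    by (simp add: m_k p_def partial_sum_Suc)
  finally have "ennreal (gg m I r u k) * tilted_tail (partial_sum I) r (m - k) (hh u k)
      \<le> ennreal (gg m I r u (Suc k)) * tilted_tail (partial_sum I) r (m - Suc k) (hh u (Suc k))"
    by (simp add: m_k ennreal_mult gg_nonneg mult.assoc mult_left_mono)
  with Suc show ?case by simp
qed simp

lemma measure_joint_tail_le:
  assumes u: "\<forall>i\<in>{1..m}. 0 \<le> u i \<and> u i < 1/2" and I: "\<And>i. i \<in> {1..m} \<Longrightarrow> I i > 0"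
    and "m \<ge> 1"
  shows "measure M {\<omega> \<in> space M. \<forall>i\<in>{1..m}. (r i)\<^sup>2 < sum_sq (partial_sum I i) \<omega>}
    \<le> gg m I r u (m - 1) * chi2_tail (I 1) ((1 - 2 * hh u (m - 1)) * (r 1)\<^sup>2)
        / (1 - 2 * hh u (m - 1)) powr (real (I 1) / 2)"
proof -
  have h: "hh u (m - 1) < 1/2" using u by (intro hh_lt_half) auto
  have "ennreal (measure M {\<omega> \<in> space M. \<forall>i\<in>{1..m}. (r i)\<^sup>2 < sum_sq (partial_sum I i) \<omega>})
      = tilted_tail (partial_sum I) r m 0"
    by (simp add: tilted_tail_zero emeasure_eq_measure)
  also have "\<dots> \<le> ennreal (gg m I r u (m - 1)) * tilted_tail (partial_sum I) r 1 (hh u (m - 1))"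
    using tilted_tail_le_gg[OF u I, where k = "m - 1"] \<open>m \<ge> 1\<close> by simp
  also have "\<dots> = ennreal (gg m I r u (m - 1) * chi2_tail (I 1) ((1 - 2 * hh u (m - 1)) * (r 1)\<^sup>2)
        / (1 - 2 * hh u (m - 1)) powr (real (I 1) / 2))"
    using tilted_tail_one[of "partial_sum I", OF _ h] I[of 1] \<open>m \<ge> 1\<close>
    by (simp add: partial_sum_def ennreal_mult[symmetric] gg_nonneg chi2_tail_def powr_minus_divide)
  moreover have "0 \<le> gg m I r u (m - 1) * chi2_tail (I 1) ((1 - 2 * hh u (m - 1)) * (r 1)\<^sup>2)
        / (1 - 2 * hh u (m - 1)) powr (real (I 1) / 2)"
    by (simp add: gg_nonneg chi2_tail_def)
  ultimately show ?thesis
    by (simp add: ennreal_le_iff)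
qed

end

theorem theorem3:
  fixes M :: "'a measure" and z :: "nat \<Rightarrow> 'a \<Rightarrow> real"
    and m :: nat and I :: "nat \<Rightarrow> nat" and r :: "nat \<Rightarrow> real"
  assumes "prob_space M"
    and "prob_space.indep_vars M (\<lambda>_. borel) z UNIV"
    and "\<And>j. distributed M lborel (z j) std_normal_density"
    and "m \<ge> 2"
    and "\<And>i. i \<in> {1..m} \<Longrightarrow> I i > 0"
    and "\<And>i. i \<in> {1..m} \<Longrightarrow> r i > 0"
  shows "measure M {\<omega> \<in> space M. \<forall>i\<in>{1..m}.
            (\<Sum>j\<in>{1..(\<Sum>k\<in>{1..i}. I k)}. (z j \<omega>)\<^sup>2) > (r i)\<^sup>2}
         \<le> (INF u \<in> {u :: nat \<Rightarrow> real. \<forall>i\<in>{1..m}. 0 \<le> u i \<and> u i < 1/2}.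
              gg m I r u (m - 1) * chi2_tail (I 1) ((1 - 2 * hh u (m - 1)) * (r 1)\<^sup>2)
              / (1 - 2 * hh u (m - 1)) powr (real (I 1) / 2))"
proof -
  interpret std_normal_sequence M z
    using assms(1-3) by (simp add: std_normal_sequence_def std_normal_sequence_axioms_def)
  have "(\<lambda>_. 0) \<in> {u :: nat \<Rightarrow> real. \<forall>i\<in>{1..m}. 0 \<le> u i \<and> u i < 1/2}"
    by simp
  then show ?thesis
    using measure_joint_tail_le[where m = m and I = I and r = r] assms(4,5)
    by (intro cINF_greatest) (auto simp: sum_sq_def partial_sum_def)
qed

end
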